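(* Let $\Bbbk$ be a field and $M$ a generalized Coxeter matrix. Let $\widetilde{NC}(M)$ be the $\Bbbk$-algebra generated by $\{T_i : i \in I\}$ and an extra generator $T_\infty$, subject to the braid relations of $M$ among the $T_i$ and the relations $T_i^{m_{ii}} = T_iT_\infty = T_\infty T_i = T_\infty^2 = T_\infty$ for all $i \in I$. Then $\Bbbk T_\infty$ is a two-sided ideal with $\widetilde{NC}(M)/\Bbbk T_\infty \cong NC(M)$, and there is a unique bialgebra structure on $\widetilde{NC}(M)$ in which all $T_i$ and $T_\infty$ are grouplike, namely $\widetilde{\Delta}(T_i) = T_i \otimes T_i$, $\widetilde{\Delta}(T_\infty) = T_\infty\otimes T_\infty$, $\widetilde{\varepsilon}(T_i) = \widetilde{\varepsilon}(T_\infty) = 1$.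
   Context: A generalized Coxeter matrix is a symmetric matrix $M = (m_{ij})_{i,j\in I}$, $I$ finite, with $m_{ij}\in\{2,3,\dots\}\cup\{\infty\}$ for $i\ne j$ and finite $m_{ii}\ge 2$; the braid relations are $\underbrace{T_iT_jT_i\cdots}_{m_{ij}} = \underbrace{T_jT_iT_j\cdots}_{m_{ij}}$ for $i\ne j$ with $m_{ij}<\infty$, and $NC(M)$ is $\Bbbk\langle T_i\rangle$ modulo the braid relations and $T_i^{m_{ii}}=0$. An element $g$ is grouplike if $\Delta(g) = g\otimes g$ and $\varepsilon(g)=1$. *)

theory Defs
  imports Main "HOL-Library.Extended_Nat" "HOL-Library.Function_Algebras"
begin

text \<open>An element of the free algebra over a field on an alphabet 'a is a finitely
supported function from words ('a list) to the field; the tensor square (cube) of the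
free algebra is the space of finitely supported functions on pairs (triples) of words.\<close>

definition fin_supp :: "('a \<Rightarrow> 'k::zero) \<Rightarrow> bool" where
  "fin_supp f \<longleftrightarrow> finite {x. f x \<noteq> 0}"

definition mon :: "'a \<Rightarrow> 'a \<Rightarrow> 'k::{zero,one}" where
  "mon w = (\<lambda>x. if x = w then 1 else 0)"

definition smul :: "'k::times \<Rightarrow> ('a \<Rightarrow> 'k) \<Rightarrow> 'a \<Rightarrow> 'k" where
  "smul c f = (\<lambda>x. c * f x)"

text \<open>Product in the free algebra (concatenation of words, extended bilinearly).\<close>
definition fmult :: "('a list \<Rightarrow> 'k::semiring_0) \<Rightarrow> ('a list \<Rightarrow> 'k) \<Rightarrow> 'a list \<Rightarrow> 'k" where
  "fmult f g = (\<lambda>w. \<Sum>n\<le>length w. f (take n w) * g (drop n w))"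

definition fone :: "'a list \<Rightarrow> 'k::{zero,one}" where
  "fone = mon []"

definition fmult2 :: "('a list \<times> 'a list \<Rightarrow> 'k::semiring_0) \<Rightarrow> ('a list \<times> 'a list \<Rightarrow> 'k)
    \<Rightarrow> 'a list \<times> 'a list \<Rightarrow> 'k" where
  "fmult2 f g = (\<lambda>(u, v). \<Sum>n\<le>length u. \<Sum>m\<le>length v.
       f (take n u, take m v) * g (drop n u, drop m v))"

definition tens :: "('a \<Rightarrow> 'k::times) \<Rightarrow> ('b \<Rightarrow> 'k) \<Rightarrow> 'a \<times> 'b \<Rightarrow> 'k" where
  "tens f g = (\<lambda>(u, v). f u * g v)"

definition tens3 :: "('a \<Rightarrow> 'k::times) \<Rightarrow> ('b \<Rightarrow> 'k) \<Rightarrow> ('c \<Rightarrow> 'k) \<Rightarrow> 'a \<times> 'b \<times> 'c \<Rightarrow> 'k" where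
  "tens3 f g h = (\<lambda>(u, v, w). f u * g v * h w)"

inductive_set lspan :: "('a \<Rightarrow> 'k::field) set \<Rightarrow> ('a \<Rightarrow> 'k) set" for S where
  lspan_zero: "(\<lambda>_. 0) \<in> lspan S"
| lspan_gen: "s \<in> S \<Longrightarrow> s \<in> lspan S"
| lspan_add: "a \<in> lspan S \<Longrightarrow> b \<in> lspan S \<Longrightarrow> a + b \<in> lspan S"
| lspan_smul: "a \<in> lspan S \<Longrightarrow> smul c a \<in> lspan S"

inductive_set ideal_gen :: "('a list \<Rightarrow> 'k::field) set \<Rightarrow> ('a list \<Rightarrow> 'k) set" for R where
  ideal_zero: "(\<lambda>_. 0) \<in> ideal_gen R"
| ideal_gen_in: "r \<in> R \<Longrightarrow> r \<in> ideal_gen R"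
| ideal_add: "a \<in> ideal_gen R \<Longrightarrow> b \<in> ideal_gen R \<Longrightarrow> a + b \<in> ideal_gen R"
| ideal_smul: "a \<in> ideal_gen R \<Longrightarrow> smul c a \<in> ideal_gen R"
| ideal_lmult: "a \<in> ideal_gen R \<Longrightarrow> fin_supp x \<Longrightarrow> fmult x a \<in> ideal_gen R"
| ideal_rmult: "a \<in> ideal_gen R \<Longrightarrow> fin_supp x \<Longrightarrow> fmult a x \<in> ideal_gen R"

text \<open>For an ideal J of the free algebra F, the kernel of F\<otimes>F \<rightarrow> (F/J)\<otimes>(F/J),
  i.e. J\<otimes>F + F\<otimes>J, and analogously for the threefold tensor product.\<close>
definition tens_ideal2 :: "('a list \<Rightarrow> 'k::field) set \<Rightarrow> ('a list \<times> 'a list \<Rightarrow> 'k) set" where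
  "tens_ideal2 J = lspan ({tens j (mon w) | j w. j \<in> J} \<union> {tens (mon w) j | j w. j \<in> J})"

definition tens_ideal3 :: "('a list \<Rightarrow> 'k::field) set \<Rightarrow> ('a list \<times> 'a list \<times> 'a list \<Rightarrow> 'k) set" where
  "tens_ideal3 J = lspan ({tens3 j (mon v) (mon w) | j v w. j \<in> J}
                        \<union> {tens3 (mon u) j (mon w) | j u w. j \<in> J}
                        \<union> {tens3 (mon u) (mon v) j | j u v. j \<in> J})"

text \<open>(\<Delta>\<otimes>id), (id\<otimes>\<Delta>), (\<epsilon>\<otimes>id), (id\<otimes>\<epsilon>) applied to a finitely supported element of F\<otimes>F,
  defined by linear extension from basis tensors.\<close>
definition comul_left :: "(('a list \<Rightarrow> 'k::field) \<Rightarrow> ('a list \<times> 'a list \<Rightarrow> 'k))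
    \<Rightarrow> ('a list \<times> 'a list \<Rightarrow> 'k) \<Rightarrow> ('a list \<times> 'a list \<times> 'a list \<Rightarrow> 'k)" where
  "comul_left D g = (\<lambda>(a, b, c). \<Sum>u\<in>fst ` {p. g p \<noteq> 0}. g (u, c) * D (mon u) (a, b))"

definition comul_right :: "(('a list \<Rightarrow> 'k::field) \<Rightarrow> ('a list \<times> 'a list \<Rightarrow> 'k))
    \<Rightarrow> ('a list \<times> 'a list \<Rightarrow> 'k) \<Rightarrow> ('a list \<times> 'a list \<times> 'a list \<Rightarrow> 'k)" where
  "comul_right D g = (\<lambda>(a, b, c). \<Sum>v\<in>snd ` {p. g p \<noteq> 0}. g (a, v) * D (mon v) (b, c))"

definition counit_left :: "(('a list \<Rightarrow> 'k::field) \<Rightarrow> 'k)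
    \<Rightarrow> ('a list \<times> 'a list \<Rightarrow> 'k) \<Rightarrow> ('a list \<Rightarrow> 'k)" where
  "counit_left E g = (\<lambda>b. \<Sum>u\<in>fst ` {p. g p \<noteq> 0}. g (u, b) * E (mon u))"

definition counit_right :: "(('a list \<Rightarrow> 'k::field) \<Rightarrow> 'k)
    \<Rightarrow> ('a list \<times> 'a list \<Rightarrow> 'k) \<Rightarrow> ('a list \<Rightarrow> 'k)" where
  "counit_right E g = (\<lambda>a. \<Sum>v\<in>snd ` {p. g p \<noteq> 0}. g (a, v) * E (mon v))"

text \<open>D, E are maps on representatives (elements of the free algebra F) describing maps
  \<Delta> : F/J \<rightarrow> (F/J)\<otimes>(F/J) and \<epsilon> : F/J \<rightarrow> k.\<close>
definition is_bialgebra :: "('a list \<Rightarrow> 'k::field) set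
    \<Rightarrow> (('a list \<Rightarrow> 'k) \<Rightarrow> ('a list \<times> 'a list \<Rightarrow> 'k)) \<Rightarrow> (('a list \<Rightarrow> 'k) \<Rightarrow> 'k) \<Rightarrow> bool" where
  "is_bialgebra J D E \<longleftrightarrow>
     (\<forall>a. fin_supp a \<longrightarrow> fin_supp (D a)) \<and>
     (\<forall>a b. fin_supp a \<longrightarrow> fin_supp b \<longrightarrow> a - b \<in> J \<longrightarrow>
        D a - D b \<in> tens_ideal2 J \<and> E a = E b) \<and>
     (\<forall>a b. fin_supp a \<longrightarrow> fin_supp b \<longrightarrow>
        D (a + b) - (D a + D b) \<in> tens_ideal2 J \<and> E (a + b) = E a + E b) \<and>
     (\<forall>c a. fin_supp a \<longrightarrow> D (smul c a) - smul c (D a) \<in> tens_ideal2 J \<and> E (smul c a) = c * E a) \<and>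
     (\<forall>a b. fin_supp a \<longrightarrow> fin_supp b \<longrightarrow>
        D (fmult a b) - fmult2 (D a) (D b) \<in> tens_ideal2 J \<and> E (fmult a b) = E a * E b) \<and>
     D fone - tens fone fone \<in> tens_ideal2 J \<and> E fone = 1 \<and>
     (\<forall>a. fin_supp a \<longrightarrow> comul_left D (D a) - comul_right D (D a) \<in> tens_ideal3 J) \<and>
     (\<forall>a. fin_supp a \<longrightarrow> counit_left E (D a) - a \<in> J \<and> counit_right E (D a) - a \<in> J)"

definition grouplike :: "('a list \<Rightarrow> 'k::field) set
    \<Rightarrow> (('a list \<Rightarrow> 'k) \<Rightarrow> ('a list \<times> 'a list \<Rightarrow> 'k)) \<Rightarrow> (('a list \<Rightarrow> 'k) \<Rightarrow> 'k)
    \<Rightarrow> ('a list \<Rightarrow> 'k) \<Rightarrow> bool" where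
  "grouplike J D E x \<longleftrightarrow> D x - tens x x \<in> tens_ideal2 J \<and> E x = 1"

text \<open>phi (on representatives) induces a k-algebra isomorphism F1/J1 \<cong> F2/K2.\<close>
definition alg_iso_mod :: "('a list \<Rightarrow> 'k::field) set \<Rightarrow> ('b list \<Rightarrow> 'k) set
    \<Rightarrow> (('a list \<Rightarrow> 'k) \<Rightarrow> ('b list \<Rightarrow> 'k)) \<Rightarrow> bool" where
  "alg_iso_mod J1 K2 \<phi> \<longleftrightarrow>
     (\<forall>a. fin_supp a \<longrightarrow> fin_supp (\<phi> a)) \<and>
     (\<forall>a b. fin_supp a \<longrightarrow> fin_supp b \<longrightarrow> (a - b \<in> J1 \<longleftrightarrow> \<phi> a - \<phi> b \<in> K2)) \<and>
     (\<forall>a b. fin_supp a \<longrightarrow> fin_supp b \<longrightarrow> \<phi> (a + b) - (\<phi> a + \<phi> b) \<in> K2) \<and>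
     (\<forall>c a. fin_supp a \<longrightarrow> \<phi> (smul c a) - smul c (\<phi> a) \<in> K2) \<and>
     (\<forall>a b. fin_supp a \<longrightarrow> fin_supp b \<longrightarrow> \<phi> (fmult a b) - fmult (\<phi> a) (\<phi> b) \<in> K2) \<and>
     \<phi> fone - fone \<in> K2 \<and>
     (\<forall>y. fin_supp y \<longrightarrow> (\<exists>x. fin_supp x \<and> \<phi> x - y \<in> K2))"

definition gen_coxeter :: "('i::finite \<Rightarrow> 'i \<Rightarrow> enat) \<Rightarrow> bool" where
  "gen_coxeter M \<longleftrightarrow> (\<forall>i j. M i j = M j i) \<and> (\<forall>i j. i \<noteq> j \<longrightarrow> 2 \<le> M i j)
      \<and> (\<forall>i. M i i \<noteq> \<infinity> \<and> 2 \<le> M i i)"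

definition alt :: "'a \<Rightarrow> 'a \<Rightarrow> nat \<Rightarrow> 'a list" where
  "alt a b m = map (\<lambda>k. if even k then a else b) [0..<m]"

definition braid_pairs :: "('i \<Rightarrow> 'i \<Rightarrow> enat) \<Rightarrow> ('i list \<times> 'i list) set" where
  "braid_pairs M = {(alt i j m, alt j i m) | i j m. i \<noteq> j \<and> M i j = enat m}"

definition NC_ideal :: "('i::finite \<Rightarrow> 'i \<Rightarrow> enat) \<Rightarrow> ('i list \<Rightarrow> 'k::field) set" where
  "NC_ideal M = ideal_gen
     ({mon u - mon v | u v. (u, v) \<in> braid_pairs M}
      \<union> {mon (replicate (the_enat (M i i)) i) | i. True})"

text \<open>Defining ideal of NC~(M) in the free algebra on generators Some i = T_i and None = T_\<infinity>.\<close>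
definition NCt_ideal :: "('i::finite \<Rightarrow> 'i \<Rightarrow> enat) \<Rightarrow> ('i option list \<Rightarrow> 'k::field) set" where
  "NCt_ideal M = ideal_gen
     ({mon (map Some u) - mon (map Some v) | u v. (u, v) \<in> braid_pairs M}
      \<union> {mon (replicate (the_enat (M i i)) (Some i)) - mon [None] | i. True}
      \<union> {mon [Some i, None] - mon [None] | i. True}
      \<union> {mon [None, Some i] - mon [None] | i. True}
      \<union> {mon [None, None] - mon [None]})"

text \<open>Preimage in the free algebra of the subspace k T_\<infinity> of NC~(M).\<close>
definition Tinf_span :: "('i::finite \<Rightarrow> 'i \<Rightarrow> enat) \<Rightarrow> ('i option list \<Rightarrow> 'k::field) set" where
  "Tinf_span M = {j + smul c (mon [None]) | j c. j \<in> NCt_ideal M}"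

end

theory Submission
  imports Defs
begin

text \<open>On the free algebra, \<open>T\<^sub>w \<mapsto> T\<^sub>w \<otimes> T\<^sub>w\<close> (\<open>diag\<close>) and \<open>T\<^sub>w \<mapsto> 1\<close> (\<open>coeff_sum\<close>) are
  algebra maps. They respect every ideal generated by binomials \<open>T\<^sub>u - T\<^sub>v\<close>, because
  \<open>\<Delta>(T\<^sub>u - T\<^sub>v) = (T\<^sub>u - T\<^sub>v) \<otimes> T\<^sub>u + T\<^sub>v \<otimes> (T\<^sub>u - T\<^sub>v)\<close>, and all defining relations of
  \<open>NC~(M)\<close> are binomials; so they give a bialgebra structure in which every letter is
  grouplike, and it is the only one since the letters generate. The relations make \<open>T\<^sub>\<infinity>\<close>
  absorb every letter from both sides, so every word containing \<open>T\<^sub>\<infinity>\<close> equals \<open>T\<^sub>\<infinity>\<close> and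
  \<open>x T\<^sub>\<infinity> = T\<^sub>\<infinity> x = \<epsilon>(x) T\<^sub>\<infinity>\<close>. Hence \<open>k T\<^sub>\<infinity>\<close> is an ideal, and the words avoiding \<open>T\<^sub>\<infinity>\<close>
  span a complement of it on which the relations become those of \<open>NC(M)\<close>, with
  \<open>T\<^sub>i\<^sup>m = T\<^sub>\<infinity>\<close> (\<open>m = m\<^sub>i\<^sub>i\<close>) turning into \<open>T\<^sub>i\<^sup>m = 0\<close>.\<close>

abbreviation supp :: "('a \<Rightarrow> 'k::zero) \<Rightarrow> 'a set" where
  "supp f \<equiv> {x. f x \<noteq> 0}"

lemma smul_apply: "smul c f x = c * f x"
  by (simp add: smul_def)

text \<open>The induction methods \<eta>-expand function-typed variables. Keeping the pointwise
  rules out of the simpset stops such expanded terms from being unfolded, so that they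
  still match the linearity lemmas below, which are stated for whole functions.\<close>
declare plus_fun_apply [simp del] zero_fun_apply [simp del] minus_apply [simp del]

lemmas pointwise_simps = plus_fun_apply zero_fun_apply minus_apply smul_apply

lemma smul_add: "smul c (f + g) = smul c f + smul c (g :: 'a \<Rightarrow> 'k::field)"
  by (simp add: fun_eq_iff pointwise_simps algebra_simps)

lemma smul_diff: "smul c (f - g) = smul c f - smul c (g :: 'a \<Rightarrow> 'k::field)"
  by (simp add: fun_eq_iff pointwise_simps algebra_simps)

lemma smul_smul: "smul c (smul d f) = smul (c * d) (f :: 'a \<Rightarrow> 'k::field)"
  by (simp add: fun_eq_iff pointwise_simps)

lemma smul_zero [simp]: "smul c (0 :: 'a \<Rightarrow> 'k::field) = 0" "smul 0 (f :: 'a \<Rightarrow> 'k::field) = 0"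
  by (simp_all add: fun_eq_iff pointwise_simps)

lemma smul_one [simp]: "smul 1 (f :: 'a \<Rightarrow> 'k::field) = f"
  by (simp add: fun_eq_iff pointwise_simps)

lemma diff_eq_add_smul: "f - g = f + smul (-1) (g :: 'a \<Rightarrow> 'k::field)"
  by (simp add: fun_eq_iff pointwise_simps)

lemma fin_supp_zero [simp]: "fin_supp (0 :: 'a \<Rightarrow> 'k::zero)"
  by (simp add: fin_supp_def zero_fun_apply)

lemma fin_supp_mon [simp]: "fin_supp (mon w :: 'a \<Rightarrow> 'k::zero_neq_one)"
  unfolding fin_supp_def by (rule finite_subset[of _ "{w}"]) (auto simp: mon_def)

lemma fin_supp_add [simp]: "fin_supp f \<Longrightarrow> fin_supp g \<Longrightarrow> fin_supp (f + g :: 'a \<Rightarrow> 'k::monoid_add)"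
  unfolding fin_supp_def by (rule finite_subset[of _ "supp f \<union> supp g"]) (auto simp: plus_fun_apply)

lemma fin_supp_smul [simp]: "fin_supp f \<Longrightarrow> fin_supp (smul c f :: 'a \<Rightarrow> 'k::field)"
  unfolding fin_supp_def by (rule finite_subset[of _ "supp f"]) (auto simp: smul_apply)

lemma fin_supp_diff [simp]: "fin_supp f \<Longrightarrow> fin_supp g \<Longrightarrow> fin_supp (f - g :: 'a \<Rightarrow> 'k::field)"
  unfolding fin_supp_def by (rule finite_subset[of _ "supp f \<union> supp g"]) (auto simp: minus_apply)

lemma fin_supp_induct_supp [consumes 1, case_names zero step]:
  fixes a :: "'a \<Rightarrow> 'k::field"
  assumes "fin_supp a" and "P 0"
    and step: "\<And>c w f. a w \<noteq> 0 \<Longrightarrow> fin_supp f \<Longrightarrow> P f \<Longrightarrow> P (smul c (mon w) + f)"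
  shows "P a"
proof -
  have "P b" if "finite G" "supp b \<subseteq> G" "G \<subseteq> supp a" for b and G
    using that
  proof (induction G arbitrary: b rule: finite_induct)
    case empty
    then have "b = 0" by (auto simp: fun_eq_iff zero_fun_apply)
    with \<open>P 0\<close> show ?case by simp
  next
    case (insert w G)
    define f where "f = b(w := 0)"
    have b: "b = smul (b w) (mon w) + f" by (auto simp: f_def mon_def fun_eq_iff pointwise_simps)
    have "supp f \<subseteq> G" using insert.prems by (auto simp: f_def)
    with insert have "P f" and "fin_supp f" by (auto simp: fin_supp_def intro: finite_subset)
    with insert.prems show ?case by (subst b) (auto intro: step)
  qed
  then show ?thesis using \<open>fin_supp a\<close> by (simp add: fin_supp_def)
qed

lemma fin_supp_induct [consumes 1, case_names zero step]:
  fixes a :: "'a \<Rightarrow> 'k::field"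
  assumes "fin_supp a" and "P 0"
    and "\<And>c w f. fin_supp f \<Longrightarrow> P f \<Longrightarrow> P (smul c (mon w) + f)"
  shows "P a"
  using assms by (induction a rule: fin_supp_induct_supp) auto

section \<open>The free algebra and its tensor square\<close>

lemma fmult_add_left: "fmult (f + g) h = fmult f h + fmult g (h :: 'a list \<Rightarrow> 'k::field)"
  by (simp add: fmult_def fun_eq_iff plus_fun_apply distrib_right sum.distrib)

lemma fmult_add_right: "fmult h (f + g) = fmult h f + fmult h (g :: 'a list \<Rightarrow> 'k::field)"
  by (simp add: fmult_def fun_eq_iff plus_fun_apply distrib_left sum.distrib)

lemma fmult_smul_left: "fmult (smul c f) h = smul c (fmult f (h :: 'a list \<Rightarrow> 'k::field))"
  by (simp add: fmult_def fun_eq_iff smul_apply sum_distrib_left mult.assoc)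

lemma fmult_smul_right: "fmult h (smul c f) = smul c (fmult h (f :: 'a list \<Rightarrow> 'k::field))"
  by (simp add: fmult_def fun_eq_iff smul_apply sum_distrib_left mult_ac)

lemma fmult_diff_left: "fmult (f - g) h = fmult f h - fmult g (h :: 'a list \<Rightarrow> 'k::field)"
  by (simp add: fmult_def fun_eq_iff minus_apply left_diff_distrib sum_subtractf)

lemma fmult_diff_right: "fmult h (f - g) = fmult h f - fmult h (g :: 'a list \<Rightarrow> 'k::field)"
  by (simp add: fmult_def fun_eq_iff minus_apply right_diff_distrib sum_subtractf)

lemma fmult_zero [simp]: "fmult 0 h = 0" "fmult h 0 = (0 :: 'a list \<Rightarrow> 'k::field)"
  by (simp_all add: fmult_def fun_eq_iff zero_fun_apply)

lemma fmult_mon_mon: "fmult (mon u) (mon v) = (mon (u @ v) :: 'a list \<Rightarrow> 'k::field)"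
proof (rule ext)
  fix w :: "'a list"
  have "mon u (take n w) * mon v (drop n w) = (if n = length u \<and> w = u @ v then 1 else (0 :: 'k))"
    if "n \<le> length w" for n
    using that by (auto simp: mon_def)
  then have "fmult (mon u) (mon v) w = (\<Sum>n\<le>length w. if n = length u \<and> w = u @ v then 1 else (0 :: 'k))"
    by (simp add: fmult_def)
  also have "\<dots> = mon (u @ v) w" by (auto simp: mon_def)
  finally show "fmult (mon u) (mon v) w = (mon (u @ v) w :: 'k)" .
qed

lemma fin_supp_fmult [simp]:
  assumes "fin_supp a" and "fin_supp b"
  shows "fin_supp (fmult a b :: 'a list \<Rightarrow> 'k::field)"
  using assms
proof (induction a rule: fin_supp_induct)
  case (step c u f)
  have "fin_supp (fmult (mon u) b)" using \<open>fin_supp b\<close>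
    by (induction b rule: fin_supp_induct) (simp_all add: fmult_add_right fmult_smul_right fmult_mon_mon)
  with step show ?case by (simp add: fmult_add_left fmult_smul_left)
qed simp

lemma fmult2_add_left: "fmult2 (f + g) h = fmult2 f h + fmult2 g (h :: 'a list \<times> 'a list \<Rightarrow> 'k::field)"
  by (simp add: fmult2_def fun_eq_iff plus_fun_apply distrib_right sum.distrib split: prod.split)

lemma fmult2_add_right: "fmult2 h (f + g) = fmult2 h f + fmult2 h (g :: 'a list \<times> 'a list \<Rightarrow> 'k::field)"
  by (simp add: fmult2_def fun_eq_iff plus_fun_apply distrib_left sum.distrib split: prod.split)

lemma fmult2_smul_left: "fmult2 (smul c f) h = smul c (fmult2 f (h :: 'a list \<times> 'a list \<Rightarrow> 'k::field))"
  by (simp add: fmult2_def fun_eq_iff smul_apply sum_distrib_left mult.assoc split: prod.split)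

lemma fmult2_smul_right: "fmult2 h (smul c f) = smul c (fmult2 h (f :: 'a list \<times> 'a list \<Rightarrow> 'k::field))"
  by (simp add: fmult2_def fun_eq_iff smul_apply sum_distrib_left mult_ac split: prod.split)

lemma fmult2_diff_left: "fmult2 (f - g) h = fmult2 f h - fmult2 g (h :: 'a list \<times> 'a list \<Rightarrow> 'k::field)"
  by (simp add: fmult2_def fun_eq_iff minus_apply left_diff_distrib sum_subtractf split: prod.split)

lemma fmult2_diff_right: "fmult2 h (f - g) = fmult2 h f - fmult2 h (g :: 'a list \<times> 'a list \<Rightarrow> 'k::field)"
  by (simp add: fmult2_def fun_eq_iff minus_apply right_diff_distrib sum_subtractf split: prod.split)

lemma fmult2_zero [simp]: "fmult2 0 h = 0" "fmult2 h 0 = (0 :: 'a list \<times> 'a list \<Rightarrow> 'k::field)"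
  by (simp_all add: fmult2_def fun_eq_iff zero_fun_apply split: prod.split)

lemma fmult2_tens: "fmult2 (tens a b) (tens c d) = tens (fmult a c) (fmult b (d :: 'a list \<Rightarrow> 'k::field))"
  by (simp add: fmult2_def fmult_def tens_def fun_eq_iff sum_product mult_ac split: prod.split)

lemma mon_pair: "mon (u, v) = tens (mon u) (mon v :: 'b \<Rightarrow> 'k::field)"
  by (auto simp: tens_def mon_def fun_eq_iff)

lemma tens_zero [simp]:
  "tens a 0 = (0 :: 'a \<times> 'b \<Rightarrow> 'k::field)" "tens 0 b = (0 :: 'a \<times> 'b \<Rightarrow> 'k::field)"
  by (simp_all add: tens_def fun_eq_iff zero_fun_apply split: prod.split)

lemma tens_add_left: "tens (a + b) c = tens a c + tens b (c :: 'b \<Rightarrow> 'k::field)"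
  by (simp add: tens_def fun_eq_iff plus_fun_apply algebra_simps split: prod.split)

lemma tens_add_right: "tens a (b + c) = tens a b + tens a (c :: 'b \<Rightarrow> 'k::field)"
  by (simp add: tens_def fun_eq_iff plus_fun_apply algebra_simps split: prod.split)

lemma tens_smul_left: "tens (smul c a) b = smul c (tens a (b :: 'b \<Rightarrow> 'k::field))"
  by (simp add: tens_def fun_eq_iff smul_apply algebra_simps split: prod.split)

lemma tens_smul_right: "tens a (smul c b) = smul c (tens a (b :: 'b \<Rightarrow> 'k::field))"
  by (simp add: tens_def fun_eq_iff smul_apply algebra_simps split: prod.split)

lemma tens_diff_left: "tens (a - b) c = tens a c - tens b (c :: 'b \<Rightarrow> 'k::field)"
  by (simp add: tens_def fun_eq_iff minus_apply algebra_simps split: prod.split)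

lemma tens_diff_right: "tens a (b - c) = tens a b - tens a (c :: 'b \<Rightarrow> 'k::field)"
  by (simp add: tens_def fun_eq_iff minus_apply algebra_simps split: prod.split)

lemma lspan_minimal:
  fixes S :: "('a \<Rightarrow> 'k::field) set"
  assumes "S \<subseteq> V" and "0 \<in> V"
    and "\<And>a b. a \<in> V \<Longrightarrow> b \<in> V \<Longrightarrow> a + b \<in> V"
    and "\<And>c a. a \<in> V \<Longrightarrow> smul c a \<in> V"
  shows "lspan S \<subseteq> V"
proof
  fix x assume "x \<in> lspan S"
  then show "x \<in> V" by induction (use assms in \<open>auto simp: zero_fun_def\<close>)
qed

lemma ideal_gen_minimal:
  fixes R :: "('a list \<Rightarrow> 'k::field) set"
  assumes "R \<subseteq> I" and "0 \<in> I"
    and "\<And>a b. a \<in> I \<Longrightarrow> b \<in> I \<Longrightarrow> a + b \<in> I"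
    and "\<And>c a. a \<in> I \<Longrightarrow> smul c a \<in> I"
    and "\<And>x a. a \<in> I \<Longrightarrow> fin_supp x \<Longrightarrow> fmult x a \<in> I"
    and "\<And>x a. a \<in> I \<Longrightarrow> fin_supp x \<Longrightarrow> fmult a x \<in> I"
  shows "ideal_gen R \<subseteq> I"
proof
  fix x assume "x \<in> ideal_gen R"
  then show "x \<in> I" by induction (use assms in \<open>auto simp: zero_fun_def\<close>)
qed

lemma ideal_gen_0 [simp]: "(0 :: 'a list \<Rightarrow> 'k::field) \<in> ideal_gen R"
  using ideal_zero[of R] by (simp add: zero_fun_def)

lemma tens_ideal2_0 [simp]: "(0 :: 'a list \<times> 'a list \<Rightarrow> 'k::field) \<in> tens_ideal2 J"
  using lspan_zero by (simp add: tens_ideal2_def zero_fun_def)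

lemma tens_ideal3_0 [simp]: "(0 :: 'a list \<times> 'a list \<times> 'a list \<Rightarrow> 'k::field) \<in> tens_ideal3 J"
  using lspan_zero by (simp add: tens_ideal3_def zero_fun_def)

lemma tens_ideal2_add: "s \<in> tens_ideal2 J \<Longrightarrow> t \<in> tens_ideal2 J \<Longrightarrow> s + t \<in> tens_ideal2 J"
  by (simp add: tens_ideal2_def lspan_add)

lemma tens_ideal2_smul: "t \<in> tens_ideal2 J \<Longrightarrow> smul c t \<in> tens_ideal2 J"
  by (simp add: tens_ideal2_def lspan_smul)

lemma tens_ideal2_induct [consumes 1, case_names left right zero add smul]:
  fixes J :: "('a list \<Rightarrow> 'k::field) set"
  assumes "t \<in> tens_ideal2 J"
    and "\<And>j w. j \<in> J \<Longrightarrow> P (tens j (mon w))"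
    and "\<And>j w. j \<in> J \<Longrightarrow> P (tens (mon w) j)"
    and "P 0"
    and "\<And>s t. P s \<Longrightarrow> P t \<Longrightarrow> P (s + t)"
    and "\<And>c t. P t \<Longrightarrow> P (smul c t)"
  shows "P t"
proof -
  have "tens_ideal2 J \<subseteq> Collect P" unfolding tens_ideal2_def
    by (rule lspan_minimal) (use assms(2-) in auto)
  with assms(1) show ?thesis by blast
qed

lemma tens_ideal2_tens_left:
  assumes "j \<in> J" and "fin_supp b"
  shows "tens j b \<in> tens_ideal2 (J :: ('a list \<Rightarrow> 'k::field) set)"
  using \<open>fin_supp b\<close>
proof (induction b rule: fin_supp_induct)
  case (step c w f)
  have "tens j (mon w) \<in> tens_ideal2 J"
    unfolding tens_ideal2_def by (rule lspan_gen) (use \<open>j \<in> J\<close> in blast)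
  with step show ?case by (simp add: tens_add_right tens_smul_right tens_ideal2_add tens_ideal2_smul)
qed simp

lemma tens_ideal2_tens_right:
  assumes "j \<in> J" and "fin_supp a"
  shows "tens a j \<in> tens_ideal2 (J :: ('a list \<Rightarrow> 'k::field) set)"
  using \<open>fin_supp a\<close>
proof (induction a rule: fin_supp_induct)
  case (step c w f)
  have "tens (mon w) j \<in> tens_ideal2 J"
    unfolding tens_ideal2_def by (rule lspan_gen) (use \<open>j \<in> J\<close> in blast)
  with step show ?case by (simp add: tens_add_left tens_smul_left tens_ideal2_add tens_ideal2_smul)
qed simp

lemma fmult2_tens_ideal2_tens:
  fixes R :: "('a list \<Rightarrow> 'k::field) set"
  assumes "t \<in> tens_ideal2 (ideal_gen R)" and "fin_supp c" and "fin_supp d"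
  shows "fmult2 t (tens c d) \<in> tens_ideal2 (ideal_gen R)"
    and "fmult2 (tens c d) t \<in> tens_ideal2 (ideal_gen R)"
  using assms(1)
proof (induction t rule: tens_ideal2_induct)
  case (left j w)
  case 1 show ?case using left assms(2,3)
    by (simp add: fmult2_tens ideal_rmult tens_ideal2_tens_left)
  case 2 show ?case using left assms(2,3)
    by (simp add: fmult2_tens ideal_lmult tens_ideal2_tens_left)
next
  case (right j w)
  case 1 show ?case using right assms(2,3)
    by (simp add: fmult2_tens ideal_rmult tens_ideal2_tens_right)
  case 2 show ?case using right assms(2,3)
    by (simp add: fmult2_tens ideal_lmult tens_ideal2_tens_right)
qed (simp_all add: fmult2_add_left fmult2_add_right fmult2_smul_left fmult2_smul_right
                   tens_ideal2_add tens_ideal2_smul)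

lemma fmult2_tens_ideal2:
  fixes R :: "('a list \<Rightarrow> 'k::field) set"
  assumes "t \<in> tens_ideal2 (ideal_gen R)" and "fin_supp q"
  shows "fmult2 t q \<in> tens_ideal2 (ideal_gen R)"
    and "fmult2 q t \<in> tens_ideal2 (ideal_gen R)"
  using assms(2)
proof (induction q rule: fin_supp_induct)
  case (step c p f)
  obtain p1 p2 where "mon p = tens (mon p1) (mon p2 :: 'a list \<Rightarrow> 'k)"
    by (metis mon_pair surj_pair)
  with fmult2_tens_ideal2_tens[OF assms(1)] step
  show "fmult2 t (smul c (mon p) + f) \<in> tens_ideal2 (ideal_gen R)"
    and "fmult2 (smul c (mon p) + f) t \<in> tens_ideal2 (ideal_gen R)"
    by (simp_all add: fmult2_add_left fmult2_add_right fmult2_smul_left fmult2_smul_right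
                      tens_ideal2_add tens_ideal2_smul)
qed simp_all

section \<open>The counit and the diagonal coproduct of the free algebra\<close>

definition coeff_sum :: "('a \<Rightarrow> 'k::comm_monoid_add) \<Rightarrow> 'k" where
  "coeff_sum a = (\<Sum>w\<in>supp a. a w)"

definition diag :: "('a \<Rightarrow> 'k::zero) \<Rightarrow> 'a \<times> 'a \<Rightarrow> 'k" where
  "diag a = (\<lambda>(u, v). if u = v then a u else 0)"

definition binomial_relations :: "('a list \<Rightarrow> 'k::field) set \<Rightarrow> bool" where
  "binomial_relations R \<longleftrightarrow> (\<forall>r\<in>R. \<exists>u v. r = mon u - mon v)"

lemma coeff_sum_eq_sum: "finite S \<Longrightarrow> supp a \<subseteq> S \<Longrightarrow> coeff_sum a = (\<Sum>w\<in>S. a w)"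
  unfolding coeff_sum_def by (rule sum.mono_neutral_left) auto

lemma coeff_sum_add:
  assumes "fin_supp a" and "fin_supp b"
  shows "coeff_sum (a + b) = coeff_sum a + coeff_sum (b :: 'a \<Rightarrow> 'k::field)"
proof -
  have S: "finite (supp a \<union> supp b)" using assms by (simp add: fin_supp_def)
  have "coeff_sum (a + b) = (\<Sum>w\<in>supp a \<union> supp b. (a + b) w)"
    by (rule coeff_sum_eq_sum[OF S]) (auto simp: plus_fun_apply)
  then show ?thesis by (simp add: coeff_sum_eq_sum[OF S] plus_fun_apply sum.distrib)
qed

lemma coeff_sum_smul: "fin_supp a \<Longrightarrow> coeff_sum (smul c a) = c * coeff_sum (a :: 'a \<Rightarrow> 'k::field)"
  by (simp add: fin_supp_def coeff_sum_eq_sum[of "supp a"] smul_apply sum_distrib_left subset_iff)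

lemma coeff_sum_diff:
  "fin_supp a \<Longrightarrow> fin_supp b \<Longrightarrow> coeff_sum (a - b) = coeff_sum a - coeff_sum (b :: 'a \<Rightarrow> 'k::field)"
  unfolding diff_eq_add_smul by (simp add: coeff_sum_add coeff_sum_smul)

lemma coeff_sum_zero [simp]: "coeff_sum (0 :: 'a \<Rightarrow> 'k::field) = 0"
  by (simp add: coeff_sum_def zero_fun_apply)

lemma coeff_sum_mon [simp]: "coeff_sum (mon w :: 'a \<Rightarrow> 'k::field) = 1"
  by (simp add: coeff_sum_eq_sum[of "{w}"] mon_def)

lemma coeff_sum_fmult:
  assumes "fin_supp a" and "fin_supp b"
  shows "coeff_sum (fmult a b) = coeff_sum a * coeff_sum (b :: 'a list \<Rightarrow> 'k::field)"
  using assms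
proof (induction a rule: fin_supp_induct)
  case (step c u f)
  have "coeff_sum (fmult (mon u) b) = coeff_sum b" using \<open>fin_supp b\<close>
    by (induction b rule: fin_supp_induct)
      (simp_all add: fmult_add_right fmult_smul_right fmult_mon_mon coeff_sum_add coeff_sum_smul)
  with step show ?case
    by (simp add: fmult_add_left fmult_smul_left coeff_sum_add coeff_sum_smul algebra_simps)
qed simp

lemma diag_add: "diag (a + b) = diag a + diag (b :: 'a \<Rightarrow> 'k::field)"
  by (auto simp: diag_def fun_eq_iff plus_fun_apply)

lemma diag_smul: "diag (smul c a) = smul c (diag (a :: 'a \<Rightarrow> 'k::field))"
  by (auto simp: diag_def fun_eq_iff smul_apply)

lemma diag_diff: "diag (a - b) = diag a - diag (b :: 'a \<Rightarrow> 'k::field)"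
  by (auto simp: diag_def fun_eq_iff minus_apply)

lemma diag_zero [simp]: "diag (0 :: 'a \<Rightarrow> 'k::field) = 0"
  by (auto simp: diag_def fun_eq_iff zero_fun_apply)

lemma diag_mon: "diag (mon w) = tens (mon w) (mon w :: 'a \<Rightarrow> 'k::field)"
  by (auto simp: diag_def tens_def mon_def fun_eq_iff)

lemma fin_supp_diag [simp]: "fin_supp a \<Longrightarrow> fin_supp (diag (a :: 'a \<Rightarrow> 'k::field))"
  unfolding fin_supp_def
  by (rule finite_subset[of _ "(\<lambda>w. (w, w)) ` supp a"]) (auto simp: diag_def split: if_splits)

lemma diag_fmult:
  assumes "fin_supp a" and "fin_supp b"
  shows "diag (fmult a b) = fmult2 (diag a) (diag (b :: 'a list \<Rightarrow> 'k::field))"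
  using assms
proof (induction a rule: fin_supp_induct)
  case (step c u f)
  have "diag (fmult (mon u) b) = fmult2 (diag (mon u)) (diag b)" using \<open>fin_supp b\<close>
    by (induction b rule: fin_supp_induct)
      (simp_all add: fmult_add_right fmult_smul_right fmult_mon_mon diag_add diag_smul
                     fmult2_add_right fmult2_smul_right diag_mon fmult2_tens)
  with step show ?case
    by (simp add: fmult_add_left fmult_smul_left diag_add diag_smul fmult2_add_left fmult2_smul_left)
qed simp

lemma diag_binomial:
  "diag (mon u - mon v) = tens (mon u - mon v) (mon u) + tens (mon v) (mon u - mon v :: 'a \<Rightarrow> 'k::field)"
  by (simp add: diag_diff diag_mon tens_diff_left tens_diff_right)

lemma
  fixes R :: "('a list \<Rightarrow> 'k::field) set"
  assumes "binomial_relations R" and "a \<in> ideal_gen R"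
  shows coeff_sum_ideal_gen: "coeff_sum a = 0"
    and diag_ideal_gen: "diag a \<in> tens_ideal2 (ideal_gen R)"
proof -
  let ?I = "{a. fin_supp a \<and> coeff_sum a = 0 \<and> diag a \<in> tens_ideal2 (ideal_gen R)}"
  have "ideal_gen R \<subseteq> ?I"
  proof (rule ideal_gen_minimal)
    show "R \<subseteq> ?I"
    proof
      fix r assume "r \<in> R"
      with assms(1) obtain u v where r: "r = mon u - mon v"
        by (auto simp: binomial_relations_def)
      have "r \<in> ideal_gen R" using \<open>r \<in> R\<close> by (rule ideal_gen_in)
      then show "r \<in> ?I"
        by (simp add: r diag_binomial coeff_sum_diff tens_ideal2_add tens_ideal2_tens_left
                      tens_ideal2_tens_right)
    qed
  qed (auto simp: coeff_sum_add coeff_sum_smul coeff_sum_fmult diag_add diag_smul diag_fmult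
                  tens_ideal2_add tens_ideal2_smul fmult2_tens_ideal2)
  with assms(2) show "coeff_sum a = 0" and "diag a \<in> tens_ideal2 (ideal_gen R)" by auto
qed

lemma fst_supp_diag: "fst ` supp (diag a) = supp (a :: 'a \<Rightarrow> 'k::field)"
  by (force simp: diag_def image_iff split: if_splits)

lemma snd_supp_diag: "snd ` supp (diag a) = supp (a :: 'a \<Rightarrow> 'k::field)"
  by (force simp: diag_def image_iff split: if_splits)

lemma comul_diag_diag:
  assumes "fin_supp a"
  shows "comul_left diag (diag a) = comul_right diag (diag (a :: 'a list \<Rightarrow> 'k::field))"
proof -
  let ?diag3 = "\<lambda>(x, y, z). if x = y \<and> y = z then a x else 0"
  have fin: "finite (supp a)" using assms by (simp add: fin_supp_def)
  have "comul_left diag (diag a) (x, y, z) = ?diag3 (x, y, z)" for x y z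
  proof -
    have "comul_left diag (diag a) (x, y, z) = (\<Sum>u\<in>supp a. if u = z then ?diag3 (x, y, z) else 0)"
      unfolding comul_left_def fst_supp_diag by (auto simp: diag_def mon_def intro: sum.cong)
    then show ?thesis using fin by simp
  qed
  moreover have "comul_right diag (diag a) (x, y, z) = ?diag3 (x, y, z)" for x y z
  proof -
    have "comul_right diag (diag a) (x, y, z) = (\<Sum>v\<in>supp a. if v = x then ?diag3 (x, y, z) else 0)"
      unfolding comul_right_def snd_supp_diag by (auto simp: diag_def mon_def intro: sum.cong)
    then show ?thesis using fin by simp
  qed
  ultimately show ?thesis by (simp add: fun_eq_iff)
qed

lemma
  assumes "fin_supp (a :: 'a list \<Rightarrow> 'k::field)"
  shows counit_left_diag: "counit_left coeff_sum (diag a) = a"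
    and counit_right_diag: "counit_right coeff_sum (diag a) = a"
proof -
  have fin: "finite (supp a)" using assms by (simp add: fin_supp_def)
  have "counit_left coeff_sum (diag a) b = (\<Sum>u\<in>supp a. if u = b then a b else 0)" for b
    unfolding counit_left_def fst_supp_diag by (auto simp: diag_def intro: sum.cong)
  moreover have "counit_right coeff_sum (diag a) b = (\<Sum>u\<in>supp a. if u = b then a b else 0)" for b
    unfolding counit_right_def snd_supp_diag by (auto simp: diag_def intro: sum.cong)
  ultimately show "counit_left coeff_sum (diag a) = a" and "counit_right coeff_sum (diag a) = a"
    using fin by (auto simp: fun_eq_iff)
qed

lemma is_bialgebra_diag:
  fixes R :: "('a list \<Rightarrow> 'k::field) set"
  assumes "binomial_relations R"
  shows "is_bialgebra (ideal_gen R) diag coeff_sum"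
  unfolding is_bialgebra_def
proof (intro conjI allI impI)
  fix a b :: "'a list \<Rightarrow> 'k" assume "fin_supp a" "fin_supp b" "a - b \<in> ideal_gen R"
  with assms show "diag a - diag b \<in> tens_ideal2 (ideal_gen R)" and "coeff_sum a = coeff_sum b"
    using diag_ideal_gen coeff_sum_ideal_gen by (force simp: diag_diff coeff_sum_diff)+
qed (simp_all add: diag_add diag_smul diag_fmult coeff_sum_add coeff_sum_smul coeff_sum_fmult
                   fone_def diag_mon comul_diag_diag counit_left_diag counit_right_diag)

lemma grouplike_diag_mon: "grouplike J diag coeff_sum (mon w)"
  by (simp add: grouplike_def diag_mon)

lemma bialgebra_grouplike_letters_word:
  fixes R :: "('a list \<Rightarrow> 'k::field) set"
  assumes bialg: "is_bialgebra (ideal_gen R) D E"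
    and letters: "\<And>g. grouplike (ideal_gen R) D E (mon [g])"
  shows "D (mon w) - diag (mon w) \<in> tens_ideal2 (ideal_gen R) \<and> E (mon w) = 1"
proof -
  let ?T = "tens_ideal2 (ideal_gen R)"
  have fin_D: "\<And>a. fin_supp a \<Longrightarrow> fin_supp (D a)"
    and mult: "\<And>a b. fin_supp a \<Longrightarrow> fin_supp b \<Longrightarrow>
                 D (fmult a b) - fmult2 (D a) (D b) \<in> ?T \<and> E (fmult a b) = E a * E b"
    and unit: "D fone - tens fone fone \<in> ?T" "E fone = 1"
    using bialg unfolding is_bialgebra_def by blast+
  show ?thesis
  proof (induction w)
    case Nil
    show ?case using unit by (simp add: fone_def diag_mon)
  next
    case (Cons g w)
    have g: "D (mon [g]) - diag (mon [g]) \<in> ?T" "E (mon [g]) = 1"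
      using letters[of g] by (simp_all add: grouplike_def diag_mon)
    have split: "mon (g # w) = fmult (mon [g]) (mon w :: 'a list \<Rightarrow> 'k)"
      by (simp add: fmult_mon_mon)
    have "D (mon (g # w)) - diag (mon (g # w))
        = (D (mon (g # w)) - fmult2 (D (mon [g])) (D (mon w)))
          + fmult2 (D (mon [g]) - diag (mon [g])) (D (mon w))
          + fmult2 (diag (mon [g])) (D (mon w) - diag (mon w))"
      by (simp add: split diag_fmult fmult2_diff_left fmult2_diff_right)
    also have "\<dots> \<in> ?T"
      using mult[of "mon [g]" "mon w"] g(1) Cons.IH
      by (intro tens_ideal2_add fmult2_tens_ideal2) (simp_all add: split fin_D)
    finally show ?case using mult[of "mon [g]" "mon w"] g(2) Cons.IH by (simp add: split)
  qed
qed

lemma bialgebra_grouplike_letters_unique: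
  fixes R :: "('a list \<Rightarrow> 'k::field) set"
  assumes bialg: "is_bialgebra (ideal_gen R) D E"
    and letters: "\<And>g. grouplike (ideal_gen R) D E (mon [g])"
    and "fin_supp a"
  shows "D a - diag a \<in> tens_ideal2 (ideal_gen R) \<and> E a = coeff_sum a"
proof -
  let ?T = "tens_ideal2 (ideal_gen R)"
  have add: "\<And>a b. fin_supp a \<Longrightarrow> fin_supp b \<Longrightarrow>
               D (a + b) - (D a + D b) \<in> ?T \<and> E (a + b) = E a + E b"
    and smul: "\<And>c a. fin_supp a \<Longrightarrow> D (smul c a) - smul c (D a) \<in> ?T \<and> E (smul c a) = c * E a"
    using bialg unfolding is_bialgebra_def by blast+
  note word = bialgebra_grouplike_letters_word[OF bialg letters]
  show ?thesis using \<open>fin_supp a\<close>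
  proof (induction a rule: fin_supp_induct)
    case zero
    show ?case using smul[of fone 0] by (simp add: fone_def)
  next
    case (step c w f)
    have "D (smul c (mon w) + f) - diag (smul c (mon w) + f)
        = (D (smul c (mon w) + f) - (D (smul c (mon w)) + D f))
          + (D (smul c (mon w)) - smul c (D (mon w)))
          + smul c (D (mon w) - diag (mon w)) + (D f - diag f)"
      by (simp add: diag_add diag_smul smul_diff)
    also have "\<dots> \<in> ?T"
      using add[of "smul c (mon w)" f] smul[of "mon w" c] word[of w] step
      by (intro tens_ideal2_add tens_ideal2_smul) simp_all
    finally show ?case
      using add[of "smul c (mon w)" f] smul[of "mon w" c] word[of w] step
      by (simp add: coeff_sum_add coeff_sum_smul)
  qed
qed

section \<open>An absorbing letter\<close>

lemma
  fixes R :: "('a list \<Rightarrow> 'k::field) set"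
  assumes "\<And>g. mon [g, z] - mon [z] \<in> ideal_gen R"
  shows absorbing_letter_word_right: "mon (w @ [z]) - mon [z] \<in> ideal_gen R"
    and absorbing_letter_fmult_right:
      "fin_supp x \<Longrightarrow> fmult x (mon [z]) - smul (coeff_sum x) (mon [z]) \<in> ideal_gen R"
proof -
  show word: "mon (w @ [z]) - mon [z] \<in> ideal_gen R" for w
  proof (induction w)
    case (Cons g w)
    have "mon ((g # w) @ [z]) - mon [z]
        = fmult (mon [g]) (mon (w @ [z]) - mon [z]) + (mon [g, z] - (mon [z] :: 'a list \<Rightarrow> 'k))"
      by (simp add: fmult_diff_right fmult_mon_mon)
    also have "\<dots> \<in> ideal_gen R" by (intro ideal_add ideal_lmult Cons.IH assms fin_supp_mon)
    finally show ?case .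
  qed simp
  show "fin_supp x \<Longrightarrow> fmult x (mon [z]) - smul (coeff_sum x) (mon [z]) \<in> ideal_gen R"
  proof (induction x rule: fin_supp_induct)
    case (step c w f)
    have "fmult (smul c (mon w) + f) (mon [z]) = smul c (mon (w @ [z])) + fmult f (mon [z])"
      by (simp add: fmult_add_left fmult_smul_left fmult_mon_mon)
    moreover have "coeff_sum (smul c (mon w) + f) = c + coeff_sum f"
      using step by (simp add: coeff_sum_add coeff_sum_smul)
    ultimately have "fmult (smul c (mon w) + f) (mon [z]) - smul (coeff_sum (smul c (mon w) + f)) (mon [z])
        = smul c (mon (w @ [z]) - mon [z]) + (fmult f (mon [z]) - smul (coeff_sum f) (mon [z]))"
      by (simp add: fun_eq_iff pointwise_simps algebra_simps)
    also have "\<dots> \<in> ideal_gen R" by (intro ideal_add ideal_smul word step)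
    finally show ?case .
  qed simp
qed

lemma
  fixes R :: "('a list \<Rightarrow> 'k::field) set"
  assumes "\<And>g. mon [z, g] - mon [z] \<in> ideal_gen R"
  shows absorbing_letter_word_left: "mon (z # w) - mon [z] \<in> ideal_gen R"
    and absorbing_letter_fmult_left:
      "fin_supp x \<Longrightarrow> fmult (mon [z]) x - smul (coeff_sum x) (mon [z]) \<in> ideal_gen R"
proof -
  show word: "mon (z # w) - mon [z] \<in> ideal_gen R" for w
  proof (induction w rule: rev_induct)
    case (snoc g w)
    have "mon (z # w @ [g]) - mon [z]
        = fmult (mon (z # w) - mon [z]) (mon [g]) + (mon [z, g] - (mon [z] :: 'a list \<Rightarrow> 'k))"
      by (simp add: fmult_diff_left fmult_mon_mon)
    also have "\<dots> \<in> ideal_gen R" by (intro ideal_add ideal_rmult snoc.IH assms fin_supp_mon)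
    finally show ?case .
  qed simp
  show "fin_supp x \<Longrightarrow> fmult (mon [z]) x - smul (coeff_sum x) (mon [z]) \<in> ideal_gen R"
  proof (induction x rule: fin_supp_induct)
    case (step c w f)
    have "fmult (mon [z]) (smul c (mon w) + f) = smul c (mon (z # w)) + fmult (mon [z]) f"
      by (simp add: fmult_add_right fmult_smul_right fmult_mon_mon)
    moreover have "coeff_sum (smul c (mon w) + f) = c + coeff_sum f"
      using step by (simp add: coeff_sum_add coeff_sum_smul)
    ultimately have "fmult (mon [z]) (smul c (mon w) + f) - smul (coeff_sum (smul c (mon w) + f)) (mon [z])
        = smul c (mon (z # w) - mon [z]) + (fmult (mon [z]) f - smul (coeff_sum f) (mon [z]))"
      by (simp add: fun_eq_iff pointwise_simps algebra_simps)
    also have "\<dots> \<in> ideal_gen R" by (intro ideal_add ideal_smul word step)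
    finally show ?case .
  qed simp
qed

lemma absorbing_letter_word:
  fixes R :: "('a list \<Rightarrow> 'k::field) set"
  assumes "\<And>g. mon [g, z] - mon [z] \<in> ideal_gen R" and "\<And>g. mon [z, g] - mon [z] \<in> ideal_gen R"
  shows "mon (u @ z # v) - mon [z] \<in> ideal_gen R"
proof -
  have "mon (u @ z # v) - mon [z]
      = fmult (mon u) (mon (z # v) - mon [z]) + (mon (u @ [z]) - (mon [z] :: 'a list \<Rightarrow> 'k))"
    by (simp add: fmult_diff_right fmult_mon_mon)
  also have "\<dots> \<in> ideal_gen R"
    by (intro ideal_add ideal_lmult fin_supp_mon absorbing_letter_word_left[OF assms(2)]
        absorbing_letter_word_right[OF assms(1)])
  finally show ?thesis .
qed

definition NCt_relations :: "('i::finite \<Rightarrow> 'i \<Rightarrow> enat) \<Rightarrow> ('i option list \<Rightarrow> 'k::field) set" where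
  "NCt_relations M =
     {mon (map Some u) - mon (map Some v) | u v. (u, v) \<in> braid_pairs M}
      \<union> {mon (replicate (the_enat (M i i)) (Some i)) - mon [None] | i. True}
      \<union> {mon [Some i, None] - mon [None] | i. True}
      \<union> {mon [None, Some i] - mon [None] | i. True}
      \<union> {mon [None, None] - mon [None]}"

lemma NCt_ideal_eq: "NCt_ideal M = ideal_gen (NCt_relations M)"
  by (simp add: NCt_ideal_def NCt_relations_def)

lemma binomial_NCt_relations: "binomial_relations (NCt_relations M)"
  unfolding binomial_relations_def NCt_relations_def by blast

lemma NCt_relations_in_NCt_ideal: "r \<in> NCt_relations M \<Longrightarrow> r \<in> NCt_ideal M"
  unfolding NCt_ideal_eq by (rule ideal_gen_in)

lemma NCt_ideal_Tinf_absorbs: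
  "mon [g, None] - mon [None] \<in> NCt_ideal M"
  "mon [None, g] - mon [None] \<in> NCt_ideal M"
  by (cases g; rule NCt_relations_in_NCt_ideal; auto simp: NCt_relations_def)+

lemma NCt_ideal_fmult_Tinf:
  assumes "fin_supp x"
  shows "fmult x (smul c (mon [None])) - smul (c * coeff_sum x) (mon [None]) \<in> NCt_ideal M"
    and "fmult (smul c (mon [None])) x - smul (c * coeff_sum x) (mon [None]) \<in> NCt_ideal M"
proof -
  note absorbs = NCt_ideal_Tinf_absorbs[of _ M, unfolded NCt_ideal_eq]
  have "fmult x (smul c (mon [None])) - smul (c * coeff_sum x) (mon [None])
      = smul c (fmult x (mon [None]) - smul (coeff_sum x) (mon [None]))"
    by (simp add: fmult_smul_right smul_diff smul_smul)
  then show "fmult x (smul c (mon [None])) - smul (c * coeff_sum x) (mon [None]) \<in> NCt_ideal M"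
    using absorbing_letter_fmult_right[OF absorbs(1) assms] by (simp add: NCt_ideal_eq ideal_smul)
  have "fmult (smul c (mon [None])) x - smul (c * coeff_sum x) (mon [None])
      = smul c (fmult (mon [None]) x - smul (coeff_sum x) (mon [None]))"
    by (simp add: fmult_smul_left smul_diff smul_smul)
  then show "fmult (smul c (mon [None])) x - smul (c * coeff_sum x) (mon [None]) \<in> NCt_ideal M"
    using absorbing_letter_fmult_left[OF absorbs(2) assms] by (simp add: NCt_ideal_eq ideal_smul)
qed

lemma Tinf_spanI: "j \<in> NCt_ideal M \<Longrightarrow> j + smul c (mon [None]) \<in> Tinf_span M"
  unfolding Tinf_span_def by blast

lemma Tinf_spanE:
  assumes "t \<in> Tinf_span M"
  obtains j c where "j \<in> NCt_ideal M" and "t = j + smul c (mon [None])"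
  using assms unfolding Tinf_span_def by blast

lemma NCt_ideal_subset_Tinf_span: "j \<in> NCt_ideal M \<Longrightarrow> j \<in> Tinf_span M"
  using Tinf_spanI[of j M 0] by simp

lemma Tinf_span_zero [simp]: "(0 :: 'i::finite option list \<Rightarrow> 'k::field) \<in> Tinf_span M"
  by (rule NCt_ideal_subset_Tinf_span) (simp add: NCt_ideal_eq)

lemma Tinf_span_add:
  fixes s t :: "'i::finite option list \<Rightarrow> 'k::field"
  assumes "s \<in> Tinf_span M" and "t \<in> Tinf_span M"
  shows "s + t \<in> Tinf_span M"
proof -
  obtain j c where j: "j \<in> NCt_ideal M" "s = j + smul c (mon [None])"
    using assms(1) by (rule Tinf_spanE)
  obtain j' c' where j': "j' \<in> NCt_ideal M" "t = j' + smul c' (mon [None])"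
    using assms(2) by (rule Tinf_spanE)
  have "j + j' \<in> NCt_ideal M" using j j' by (simp add: NCt_ideal_eq ideal_add)
  moreover have "s + t = (j + j') + smul (c + c') (mon [None])"
    using j j' by (simp add: fun_eq_iff pointwise_simps algebra_simps)
  ultimately show ?thesis by (metis Tinf_spanI)
qed

lemma Tinf_span_smul:
  fixes t :: "'i::finite option list \<Rightarrow> 'k::field"
  assumes "t \<in> Tinf_span M"
  shows "smul d t \<in> Tinf_span M"
proof -
  obtain j c where j: "j \<in> NCt_ideal M" "t = j + smul c (mon [None])"
    using assms by (rule Tinf_spanE)
  have "smul d j \<in> NCt_ideal M" using j by (simp add: NCt_ideal_eq ideal_smul)
  moreover have "smul d t = smul d j + smul (d * c) (mon [None])"
    using j by (simp add: smul_add smul_smul)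
  ultimately show ?thesis by (metis Tinf_spanI)
qed

lemma Tinf_span_fmult:
  fixes t :: "'i::finite option list \<Rightarrow> 'k::field"
  assumes "t \<in> Tinf_span M" and "fin_supp x"
  shows "fmult x t \<in> Tinf_span M" and "fmult t x \<in> Tinf_span M"
proof -
  obtain j c where j: "j \<in> NCt_ideal M" "t = j + smul c (mon [None])"
    using assms(1) by (rule Tinf_spanE)
  let ?e = "smul (c * coeff_sum x) (mon [None])"
  have "fmult x j + (fmult x (smul c (mon [None])) - ?e) \<in> NCt_ideal M"
    using j NCt_ideal_fmult_Tinf(1)[OF assms(2)] assms(2)
    by (simp add: NCt_ideal_eq ideal_add ideal_lmult)
  moreover have "fmult x t = (fmult x j + (fmult x (smul c (mon [None])) - ?e)) + ?e"
    using j by (simp add: fmult_add_right)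
  ultimately show "fmult x t \<in> Tinf_span M" by (metis Tinf_spanI)
  have "fmult j x + (fmult (smul c (mon [None])) x - ?e) \<in> NCt_ideal M"
    using j NCt_ideal_fmult_Tinf(2)[OF assms(2)] assms(2)
    by (simp add: NCt_ideal_eq ideal_add ideal_rmult)
  moreover have "fmult t x = (fmult j x + (fmult (smul c (mon [None])) x - ?e)) + ?e"
    using j by (simp add: fmult_add_left)
  ultimately show "fmult t x \<in> Tinf_span M" by (metis Tinf_spanI)
qed

lemma Tinf_span_if_Tinf_in_supp:
  fixes r :: "'i::finite option list \<Rightarrow> 'k::field"
  assumes "fin_supp r" and "\<And>w. r w \<noteq> 0 \<Longrightarrow> None \<in> set w"
  shows "r \<in> Tinf_span M"
  using assms(1)
proof (induction r rule: fin_supp_induct_supp)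
  case (step c w f)
  obtain u v where w: "w = u @ None # v"
    using assms(2)[OF step(1)] by (meson split_list)
  have "mon w - mon [None] \<in> NCt_ideal M"
    unfolding w NCt_ideal_eq by (intro absorbing_letter_word NCt_ideal_Tinf_absorbs[unfolded NCt_ideal_eq])
  then have "(mon w - mon [None]) + smul 1 (mon [None]) \<in> Tinf_span M" by (rule Tinf_spanI)
  then have "mon w \<in> Tinf_span M" by simp
  then show ?case by (intro Tinf_span_add Tinf_span_smul step)
qed simp

section \<open>The quotient by \<open>k T\<^sub>\<infinity>\<close> is \<open>NC(M)\<close>\<close>

text \<open>Words of \<open>NC(M)\<close> are identified with the words of \<open>NC~(M)\<close> not containing \<open>T\<^sub>\<infinity>\<close>;
  coefficients of words containing \<open>T\<^sub>\<infinity>\<close> are dropped by \<open>pull_Some\<close>.\<close>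
definition push_Some :: "('i list \<Rightarrow> 'k::zero) \<Rightarrow> 'i option list \<Rightarrow> 'k" where
  "push_Some a = (\<lambda>w. if None \<in> set w then 0 else a (map the w))"

definition pull_Some :: "('i option list \<Rightarrow> 'k) \<Rightarrow> 'i list \<Rightarrow> 'k" where
  "pull_Some b = (\<lambda>w. b (map Some w))"

lemma map_Some_the [simp]: "None \<notin> set w \<Longrightarrow> map (Some \<circ> the) w = w"
  by (induction w) auto

lemma pull_push_Some [simp]: "pull_Some (push_Some a) = a"
  by (simp add: pull_Some_def push_Some_def fun_eq_iff)

lemma push_Some_add: "push_Some (a + b) = push_Some a + push_Some (b :: 'i list \<Rightarrow> 'k::field)"
  by (simp add: push_Some_def fun_eq_iff plus_fun_apply)

lemma push_Some_smul: "push_Some (smul c a) = smul c (push_Some (a :: 'i list \<Rightarrow> 'k::field))"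
  by (simp add: push_Some_def fun_eq_iff smul_apply)

lemma push_Some_diff: "push_Some (a - b) = push_Some a - push_Some (b :: 'i list \<Rightarrow> 'k::field)"
  by (simp add: push_Some_def fun_eq_iff minus_apply)

lemma push_Some_zero [simp]: "push_Some (0 :: 'i list \<Rightarrow> 'k::field) = 0"
  by (simp add: push_Some_def fun_eq_iff zero_fun_apply)

lemma push_Some_mon: "push_Some (mon u) = (mon (map Some u) :: 'i option list \<Rightarrow> 'k::field)"
  by (auto simp: push_Some_def mon_def fun_eq_iff map_Some_the dest: map_Some_the)

lemma push_Some_fmult: "push_Some (fmult a b) = fmult (push_Some a) (push_Some (b :: 'i list \<Rightarrow> 'k::field))"
proof (rule ext)
  fix w :: "'i option list"
  show "push_Some (fmult a b) w = fmult (push_Some a) (push_Some b) w"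
  proof (cases "None \<in> set w")
    case True
    then have "None \<in> set (take n w) \<or> None \<in> set (drop n w)" for n
      by (metis Un_iff append_take_drop_id set_append)
    then have "push_Some a (take n w) * push_Some b (drop n w) = 0" for n
      by (auto simp: push_Some_def)
    then have "fmult (push_Some a) (push_Some b) w = 0"
      unfolding fmult_def by (blast intro: sum.neutral)
    with True show ?thesis by (simp add: push_Some_def)
  next
    case False
    then have "None \<notin> set (take n w)" "None \<notin> set (drop n w)" for n
      by (meson in_set_takeD in_set_dropD)+
    with False show ?thesis by (simp add: push_Some_def fmult_def take_map drop_map)
  qed
qed

lemma fin_supp_push_Some [simp]: "fin_supp a \<Longrightarrow> fin_supp (push_Some (a :: 'i list \<Rightarrow> 'k::field))"
  unfolding fin_supp_def
  by (rule finite_subset[of _ "map Some ` supp a"])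
    (auto simp: push_Some_def split: if_splits intro!: image_eqI[where x = "map the _"])

lemma pull_Some_add: "pull_Some (a + b) = pull_Some a + pull_Some (b :: 'i option list \<Rightarrow> 'k::field)"
  by (simp add: pull_Some_def fun_eq_iff plus_fun_apply)

lemma pull_Some_smul: "pull_Some (smul c a) = smul c (pull_Some (a :: 'i option list \<Rightarrow> 'k::field))"
  by (simp add: pull_Some_def fun_eq_iff smul_apply)

lemma pull_Some_diff: "pull_Some (a - b) = pull_Some a - pull_Some (b :: 'i option list \<Rightarrow> 'k::field)"
  by (simp add: pull_Some_def fun_eq_iff minus_apply)

lemma pull_Some_zero [simp]: "pull_Some (0 :: 'i option list \<Rightarrow> 'k::field) = 0"
  by (simp add: pull_Some_def fun_eq_iff zero_fun_apply)

lemma pull_Some_mon_Some: "pull_Some (mon (map Some u) :: 'i option list \<Rightarrow> 'k::field) = mon u"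
  by (auto simp: pull_Some_def mon_def fun_eq_iff inj_map_eq_map)

lemma pull_Some_mon_None: "None \<in> set w \<Longrightarrow> pull_Some (mon w :: 'i option list \<Rightarrow> 'k::field) = 0"
  by (auto simp: pull_Some_def mon_def fun_eq_iff zero_fun_apply)

lemma pull_Some_fmult: "pull_Some (fmult a b) = fmult (pull_Some a) (pull_Some (b :: 'i option list \<Rightarrow> 'k::field))"
  by (simp add: pull_Some_def fmult_def fun_eq_iff take_map drop_map)

lemma fin_supp_pull_Some [simp]: "fin_supp b \<Longrightarrow> fin_supp (pull_Some (b :: 'i option list \<Rightarrow> 'k::field))"
  unfolding fin_supp_def pull_Some_def
  by (drule finite_vimageI[of _ "map Some"]) (simp_all add: inj_on_def vimage_def)

lemma pull_Some_NCt_ideal: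
  assumes "j \<in> NCt_ideal M"
  shows "pull_Some j \<in> (NC_ideal M :: ('i::finite list \<Rightarrow> 'k::field) set)"
proof -
  have "ideal_gen (NCt_relations M) \<subseteq> {j. pull_Some j \<in> (NC_ideal M :: ('i list \<Rightarrow> 'k) set)}"
  proof (rule ideal_gen_minimal)
    show "NCt_relations M \<subseteq> {j. pull_Some j \<in> (NC_ideal M :: ('i list \<Rightarrow> 'k) set)}"
      unfolding NCt_relations_def NC_ideal_def
      by (force simp: pull_Some_diff pull_Some_mon_Some pull_Some_mon_None
          pull_Some_mon_Some[of "replicate _ _", simplified] intro: ideal_gen_in)
  qed (simp_all add: NC_ideal_def pull_Some_add pull_Some_smul pull_Some_fmult
                     ideal_add ideal_smul ideal_lmult ideal_rmult)
  with assms show ?thesis by (auto simp: NCt_ideal_eq)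
qed

lemma push_Some_NC_ideal:
  assumes "j \<in> (NC_ideal M :: ('i::finite list \<Rightarrow> 'k::field) set)"
  shows "push_Some j \<in> Tinf_span M"
proof -
  let ?NC_relations = "{mon u - mon v | u v. (u, v) \<in> braid_pairs M}
      \<union> {mon (replicate (the_enat (M i i)) i) | i. True} :: ('i list \<Rightarrow> 'k) set"
  have "ideal_gen ?NC_relations \<subseteq> {j. push_Some j \<in> Tinf_span M}"
  proof (rule ideal_gen_minimal)
    show "?NC_relations \<subseteq> {j. push_Some j \<in> Tinf_span M}"
    proof
      fix r assume "r \<in> ?NC_relations"
      then consider u v where "r = mon u - mon v" "(u, v) \<in> braid_pairs M"
        | i where "r = mon (replicate (the_enat (M i i)) i)"
        by blast
      then show "r \<in> {j. push_Some j \<in> Tinf_span M}"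
      proof cases
        case 1
        then have "push_Some r = mon (map Some u) - mon (map Some v)"
          by (simp add: push_Some_diff push_Some_mon)
        also have "\<dots> \<in> NCt_ideal M"
          using 1 by (intro NCt_relations_in_NCt_ideal) (auto simp: NCt_relations_def)
        finally show ?thesis by (simp add: NCt_ideal_subset_Tinf_span)
      next
        case 2
        have "mon (replicate (the_enat (M i i)) (Some i)) - mon [None] \<in> NCt_ideal M"
          by (rule NCt_relations_in_NCt_ideal) (auto simp: NCt_relations_def)
        from Tinf_spanI[OF this, of 1] 2 show ?thesis by (simp add: push_Some_mon map_replicate)
      qed
    qed
  qed (simp_all add: push_Some_add push_Some_smul push_Some_fmult
                     Tinf_span_add Tinf_span_smul Tinf_span_fmult)
  with assms show ?thesis by (auto simp: NC_ideal_def)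
qed

lemma alg_iso_mod_push_Some:
  "alg_iso_mod (NC_ideal M :: ('i::finite list \<Rightarrow> 'k::field) set) (Tinf_span M) push_Some"
  unfolding alg_iso_mod_def
proof (intro conjI allI impI)
  fix a b :: "'i list \<Rightarrow> 'k"
  show "a - b \<in> NC_ideal M \<longleftrightarrow> push_Some a - push_Some b \<in> Tinf_span M"
  proof
    assume "a - b \<in> NC_ideal M"
    then show "push_Some a - push_Some b \<in> Tinf_span M"
      unfolding push_Some_diff[symmetric] by (rule push_Some_NC_ideal)
  next
    assume "push_Some a - push_Some b \<in> Tinf_span M"
    then obtain j c where j: "j \<in> NCt_ideal M" "push_Some (a - b) = j + smul c (mon [None])"
      unfolding push_Some_diff[symmetric] by (rule Tinf_spanE)
    have "a - b = pull_Some (push_Some (a - b))" by simp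
    also have "\<dots> = pull_Some j"
      by (simp add: j(2) pull_Some_add pull_Some_smul pull_Some_mon_None)
    finally show "a - b \<in> NC_ideal M" using pull_Some_NCt_ideal[OF j(1)] by simp
  qed
next
  fix y :: "'i option list \<Rightarrow> 'k" assume "fin_supp y"
  define r where "r = (\<lambda>w. if None \<in> set w then y w else 0)"
  have "fin_supp r"
    using \<open>fin_supp y\<close> unfolding fin_supp_def r_def by (rule finite_subset[rotated]) auto
  then have "r \<in> Tinf_span M" by (rule Tinf_span_if_Tinf_in_supp) (simp add: r_def split: if_splits)
  moreover have "push_Some (pull_Some y) - y = smul (-1) r"
    by (auto simp: fun_eq_iff push_Some_def pull_Some_def r_def minus_apply smul_apply)
  ultimately show "\<exists>x. fin_supp x \<and> push_Some x - y \<in> Tinf_span M"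
    using \<open>fin_supp y\<close> Tinf_span_smul by (metis fin_supp_pull_Some)
qed (simp_all add: push_Some_add push_Some_smul push_Some_fmult fone_def push_Some_mon)

theorem mainTheorem14:
  fixes M :: "'i::finite \<Rightarrow> 'i \<Rightarrow> enat"
  assumes "gen_coxeter M"
  shows "(\<forall>(x :: 'i option list \<Rightarrow> 'k::field) c. fin_supp x \<longrightarrow>
            (\<exists>c'. fmult x (smul c (mon [None])) - smul c' (mon [None]) \<in> NCt_ideal M) \<and>
            (\<exists>c'. fmult (smul c (mon [None])) x - smul c' (mon [None]) \<in> NCt_ideal M))
       \<and> (\<exists>\<phi>. alg_iso_mod (NC_ideal M :: ('i list \<Rightarrow> 'k) set) (Tinf_span M) \<phi>)
       \<and> (\<exists>D E. is_bialgebra (NCt_ideal M :: ('i option list \<Rightarrow> 'k) set) D E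
              \<and> (\<forall>g. grouplike (NCt_ideal M) D E (mon [g]))
              \<and> (\<forall>D' E'. is_bialgebra (NCt_ideal M) D' E'
                       \<and> (\<forall>g. grouplike (NCt_ideal M) D' E' (mon [g]))
                   \<longrightarrow> (\<forall>a. fin_supp a \<longrightarrow> D' a - D a \<in> tens_ideal2 (NCt_ideal M) \<and> E' a = E a)))"
proof (intro conjI allI impI exI)
  fix x :: "'i option list \<Rightarrow> 'k" and c assume "fin_supp x"
  then show "fmult x (smul c (mon [None])) - smul (c * coeff_sum x) (mon [None]) \<in> NCt_ideal M"
    and "fmult (smul c (mon [None])) x - smul (c * coeff_sum x) (mon [None]) \<in> NCt_ideal M"
    by (rule NCt_ideal_fmult_Tinf)+
next
  show "alg_iso_mod (NC_ideal M :: ('i list \<Rightarrow> 'k) set) (Tinf_span M) push_Some"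
    by (rule alg_iso_mod_push_Some)
next
  show "is_bialgebra (NCt_ideal M :: ('i option list \<Rightarrow> 'k) set) diag coeff_sum"
    unfolding NCt_ideal_eq by (rule is_bialgebra_diag[OF binomial_NCt_relations])
next
  fix g show "grouplike (NCt_ideal M :: ('i option list \<Rightarrow> 'k) set) diag coeff_sum (mon [g])"
    by (rule grouplike_diag_mon)
next
  fix D' :: "('i option list \<Rightarrow> 'k) \<Rightarrow> 'i option list \<times> 'i option list \<Rightarrow> 'k"
    and E' :: "('i option list \<Rightarrow> 'k) \<Rightarrow> 'k" and a :: "'i option list \<Rightarrow> 'k"
  assume "is_bialgebra (NCt_ideal M) D' E' \<and> (\<forall>g. grouplike (NCt_ideal M) D' E' (mon [g]))"
    and "fin_supp a"
  then show "D' a - diag a \<in> tens_ideal2 (NCt_ideal M)" and "E' a = coeff_sum a"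
    using bialgebra_grouplike_letters_unique[of "NCt_relations M" D' E' a]
    by (simp_all add: NCt_ideal_eq)
qed

end
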